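(* Let $n\ge2$. Every finite rooted poset $F$ of height $n$ which validates $\mathbf{PL}$ is the image of a sawed tree of height $n$ under a surjective p-morphism.
   Context: A p-morphism $f\colon G\to F$ is a map with $f(\uparrow x)=\uparrow f(x)$ for all $x$. A finite tree is a finite rooted poset in which each $\downarrow x$ is a chain; $\mathrm{Top}(T)$ is its set of maximal elements. Let $T$ be a finite tree of height $>0$ all of whose top elements have the same height, with a plane ordering $\prec$ of $\mathrm{Top}(T)$ (a linear order such that each $\uparrow x\cap\mathrm{Top}(T)$ is a $\prec$-interval); enumerate $\mathrm{Top}(T)=\{t_1\prec\cdots\prec t_k\}$. The sawed tree based on $(T,\prec)$ is $T$ together with new elements $s_1,\dots,s_{k-1}$ with $t_i<s_i$ and $t_{i+1}<s_i$ (closed under transitivity). The height of a poset is the maximum of $|C|-1$ over chains $C$. For a finite rooted poset $Q$, $\chi(Q)$ is its Jankov–Fine formula: a frame validates $\chi(Q)$ iff it has no surjective p-morphism from an upset of it onto $Q$. The 3-fork is $\{r,a,b,c\}$ with $r<a,r<b,r<c$ only; the Scott frame is $\{r,u_1,u_2,v\}$ with $r<u_1<u_2$, $r<v$ (and $r<u_2$) only. $\mathbf{PL}$ is the smallest intermediate logic containing $\chi(\text{3-fork})$ and $\chi(\text{Scott frame})$. *)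

theory Defs
  imports Main
begin

definition is_poset :: "'a set \<Rightarrow> ('a \<Rightarrow> 'a \<Rightarrow> bool) \<Rightarrow> bool" where
  "is_poset W le \<longleftrightarrow>
     (\<forall>x\<in>W. le x x) \<and>
     (\<forall>x\<in>W. \<forall>y\<in>W. le x y \<and> le y x \<longrightarrow> x = y) \<and>
     (\<forall>x\<in>W. \<forall>y\<in>W. \<forall>z\<in>W. le x y \<and> le y z \<longrightarrow> le x z)"

definition is_root :: "'a set \<Rightarrow> ('a \<Rightarrow> 'a \<Rightarrow> bool) \<Rightarrow> 'a \<Rightarrow> bool" where
  "is_root W le r \<longleftrightarrow> r \<in> W \<and> (\<forall>x\<in>W. le r x)"

definition finite_rooted_poset :: "'a set \<Rightarrow> ('a \<Rightarrow> 'a \<Rightarrow> bool) \<Rightarrow> bool" where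
  "finite_rooted_poset W le \<longleftrightarrow> finite W \<and> is_poset W le \<and> (\<exists>r. is_root W le r)"

definition up :: "'a set \<Rightarrow> ('a \<Rightarrow> 'a \<Rightarrow> bool) \<Rightarrow> 'a \<Rightarrow> 'a set" where
  "up W le x = {y\<in>W. le x y}"

definition down :: "'a set \<Rightarrow> ('a \<Rightarrow> 'a \<Rightarrow> bool) \<Rightarrow> 'a \<Rightarrow> 'a set" where
  "down W le x = {y\<in>W. le y x}"

definition is_chain :: "('a \<Rightarrow> 'a \<Rightarrow> bool) \<Rightarrow> 'a set \<Rightarrow> bool" where
  "is_chain le C \<longleftrightarrow> (\<forall>x\<in>C. \<forall>y\<in>C. le x y \<or> le y x)"

definition has_height :: "'a set \<Rightarrow> ('a \<Rightarrow> 'a \<Rightarrow> bool) \<Rightarrow> nat \<Rightarrow> bool" where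
  "has_height W le n \<longleftrightarrow>
     (\<exists>C. C \<subseteq> W \<and> is_chain le C \<and> finite C \<and> card C = n + 1) \<and>
     (\<forall>C. C \<subseteq> W \<and> is_chain le C \<longrightarrow> finite C \<and> card C \<le> n + 1)"

definition is_upset :: "'a set \<Rightarrow> ('a \<Rightarrow> 'a \<Rightarrow> bool) \<Rightarrow> 'a set \<Rightarrow> bool" where
  "is_upset W le U \<longleftrightarrow> U \<subseteq> W \<and> (\<forall>x\<in>U. \<forall>y\<in>W. le x y \<longrightarrow> y \<in> U)"

definition p_morphism ::
  "'a set \<Rightarrow> ('a \<Rightarrow> 'a \<Rightarrow> bool) \<Rightarrow> 'b set \<Rightarrow> ('b \<Rightarrow> 'b \<Rightarrow> bool) \<Rightarrow> ('a \<Rightarrow> 'b) \<Rightarrow> bool" where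
  "p_morphism G leG F leF f \<longleftrightarrow>
     (\<forall>x\<in>G. f x \<in> F) \<and> (\<forall>x\<in>G. f ` up G leG x = up F leF (f x))"

definition surj_p_morphism ::
  "'a set \<Rightarrow> ('a \<Rightarrow> 'a \<Rightarrow> bool) \<Rightarrow> 'b set \<Rightarrow> ('b \<Rightarrow> 'b \<Rightarrow> bool) \<Rightarrow> ('a \<Rightarrow> 'b) \<Rightarrow> bool" where
  "surj_p_morphism G leG F leF f \<longleftrightarrow> p_morphism G leG F leF f \<and> f ` G = F"

text \<open>Frame (W, le) validates the Jankov--Fine formula of Q iff there is no surjective
  p-morphism from an upset of W onto Q.\<close>
definition validates_jankov_fine ::
  "'a set \<Rightarrow> ('a \<Rightarrow> 'a \<Rightarrow> bool) \<Rightarrow> 'b set \<Rightarrow> ('b \<Rightarrow> 'b \<Rightarrow> bool) \<Rightarrow> bool" where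
  "validates_jankov_fine W le Q leQ \<longleftrightarrow>
     \<not> (\<exists>U f. is_upset W le U \<and> surj_p_morphism U le Q leQ f)"

text \<open>3-fork: r = 0, a = 1, b = 2, c = 3.\<close>
definition fork3 :: "nat set" where "fork3 = {0, 1, 2, 3}"
definition fork3_le :: "nat \<Rightarrow> nat \<Rightarrow> bool" where
  "fork3_le x y \<longleftrightarrow> x = y \<or> x = 0"

text \<open>Scott frame: r = 0, u1 = 1, u2 = 2, v = 3.\<close>
definition scott :: "nat set" where "scott = {0, 1, 2, 3}"
definition scott_le :: "nat \<Rightarrow> nat \<Rightarrow> bool" where
  "scott_le x y \<longleftrightarrow> x = y \<or> x = 0 \<or> (x = 1 \<and> y = 2)"

text \<open>A frame validates PL (the least intermediate logic containing the two Jankov--Fine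
  formulas) iff it validates both Jankov--Fine formulas (frame validity is closed under
  modus ponens and substitution).\<close>
definition validates_PL :: "'a set \<Rightarrow> ('a \<Rightarrow> 'a \<Rightarrow> bool) \<Rightarrow> bool" where
  "validates_PL W le \<longleftrightarrow>
     validates_jankov_fine W le fork3 fork3_le \<and> validates_jankov_fine W le scott scott_le"

definition finite_tree :: "'a set \<Rightarrow> ('a \<Rightarrow> 'a \<Rightarrow> bool) \<Rightarrow> bool" where
  "finite_tree T le \<longleftrightarrow> finite_rooted_poset T le \<and> (\<forall>x\<in>T. is_chain le (down T le x))"

definition tops :: "'a set \<Rightarrow> ('a \<Rightarrow> 'a \<Rightarrow> bool) \<Rightarrow> 'a set" where
  "tops T le = {x\<in>T. \<forall>y\<in>T. le x y \<longrightarrow> y = x}"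

text \<open>A plane ordering of Top(T), given as the enumeration list ts = [t_1, ..., t_k]
  (t_i \<prec> t_j iff i < j); each \<up>x \<inter> Top(T) must be a \<prec>-interval.\<close>
definition plane_enum :: "'a set \<Rightarrow> ('a \<Rightarrow> 'a \<Rightarrow> bool) \<Rightarrow> 'a list \<Rightarrow> bool" where
  "plane_enum T le ts \<longleftrightarrow> distinct ts \<and> set ts = tops T le \<and>
     (\<forall>x\<in>T. \<forall>i j l. i < j \<and> j < l \<and> l < length ts \<and>
        le x (ts ! i) \<and> le x (ts ! l) \<longrightarrow> le x (ts ! j))"

text \<open>Data of a sawed tree: a finite tree of height > 0 whose top elements all have the
  same height (depth), together with a plane ordering of its tops.\<close>
definition sawed_tree_data :: "'a set \<Rightarrow> ('a \<Rightarrow> 'a \<Rightarrow> bool) \<Rightarrow> 'a list \<Rightarrow> bool" where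
  "sawed_tree_data T le ts \<longleftrightarrow> finite_tree T le \<and> (\<exists>m>0. has_height T le m) \<and>
     (\<forall>t\<in>tops T le. \<forall>t'\<in>tops T le. card (down T le t) = card (down T le t')) \<and>
     plane_enum T le ts"

text \<open>The sawed tree: Inl x for x \<in> T, and Inr i (i < k - 1, 0-based) for the new element
  s_(i+1) lying above t_(i+1) and t_(i+2) (1-based), i.e. above ts!i and ts!(i+1).\<close>
definition sawed_carrier :: "'a set \<Rightarrow> 'a list \<Rightarrow> ('a + nat) set" where
  "sawed_carrier T ts = Inl ` T \<union> Inr ` {i. Suc i < length ts}"

fun sawed_le :: "('a \<Rightarrow> 'a \<Rightarrow> bool) \<Rightarrow> 'a list \<Rightarrow> 'a + nat \<Rightarrow> 'a + nat \<Rightarrow> bool" where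
  "sawed_le le ts (Inl a) (Inl b) = le a b"
| "sawed_le le ts (Inl a) (Inr i) = (le a (ts ! i) \<or> le a (ts ! Suc i))"
| "sawed_le le ts (Inr i) (Inl b) = False"
| "sawed_le le ts (Inr i) (Inr j) = (i = j)"

end

theory Submission
  imports Defs "HOL-Library.Nat_Bijection"
begin

text \<open>
  In a finite frame validating PL, refuting the 3-fork means that a point of depth one sees at
  most two maximal points, and refuting the Scott frame means that above a point \<open>x\<close> with a
  non-maximal proper successor, any two maximal points are joined by a chain of maximal points in
  which consecutive ones lie together above a proper successor of \<open>x\<close>. Hence for every point
  \<open>x\<close> and maximal points \<open>a\<close>, \<open>b\<close> above it there is a walk: a list of labels \<open>(y, c, d)\<close>,
  with \<open>y\<close> above \<open>x\<close> and \<open>c\<close>, \<open>d\<close> maximal above \<open>y\<close>, leading from \<open>a\<close> to \<open>b\<close> and covering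
  \<open>\<up>x\<close>. Padding all walks to a common length \<open>B\<close> and expanding labels level by level from
  \<open>(root, m, m)\<close> labels the complete \<open>B\<close>-ary tree of height \<open>n - 1\<close>; its leaves carry points
  of depth at most one together with the maximal points above them. Sending each node to the
  point of its label and each tooth of the saw to the maximal point shared by its two leaves is
  a surjective p-morphism, since every walk covers the upset of its point.
\<close>

lemma ex_common_bound:
  assumes "finite S" and "\<And>s. s \<in> S \<Longrightarrow> \<exists>k. P s k"
    and "\<And>s k. s \<in> S \<Longrightarrow> P s k \<Longrightarrow> P s (Suc k)"
  shows "\<exists>k \<ge> k0. \<forall>s \<in> S. P s k"
proof -
  have upward: "P s k'" if "s \<in> S" "P s k" "k \<le> k'" for s k k'
    using that(3,2) by (induction k' rule: dec_induct) (use assms(3) that(1) in auto)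
  obtain k where k: "\<forall>s \<in> S. P s (k s)" using bchoice[of S P] assms(2) by blast
  define K where "K = Max (insert k0 (k ` S))"
  have "k0 \<le> K" "\<forall>s \<in> S. k s \<le> K" using assms(1) by (auto simp: K_def)
  then show ?thesis using upward k by blast
qed

type_synonym 'a label = "'a \<times> 'a \<times> 'a"

section \<open>Finite posets\<close>

locale finite_poset =
  fixes F :: "'a set" and le :: "'a \<Rightarrow> 'a \<Rightarrow> bool"
  assumes finite_F: "finite F" and poset: "is_poset F le"
begin

lemma F_refl: "x \<in> F \<Longrightarrow> le x x"
  using poset unfolding is_poset_def by blast

lemma F_antisym: "x \<in> F \<Longrightarrow> y \<in> F \<Longrightarrow> le x y \<Longrightarrow> le y x \<Longrightarrow> x = y"
  using poset unfolding is_poset_def by blast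

lemma F_trans: "x \<in> F \<Longrightarrow> y \<in> F \<Longrightarrow> z \<in> F \<Longrightarrow> le x y \<Longrightarrow> le y z \<Longrightarrow> le x z"
  using poset unfolding is_poset_def by blast

lemma up_subset: "up F le x \<subseteq> F"
  by (auto simp: up_def)

lemma finite_up: "finite (up F le x)"
  using finite_F up_subset by (rule rev_finite_subset)

lemma self_in_up: "x \<in> F \<Longrightarrow> x \<in> up F le x"
  using F_refl by (simp add: up_def)

lemma up_antimono: "x \<in> F \<Longrightarrow> y \<in> F \<Longrightarrow> le x y \<Longrightarrow> up F le y \<subseteq> up F le x"
  unfolding up_def using F_trans by blast

lemma up_is_upset: "x \<in> F \<Longrightarrow> is_upset F le (up F le x)"
  unfolding is_upset_def up_def using F_trans by blast

lemma tops_subset: "tops F le \<subseteq> F"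
  by (auto simp: tops_def)

lemma up_top: "m \<in> tops F le \<Longrightarrow> up F le m = {m}"
  unfolding tops_def up_def using F_refl by blast

definition max_above :: "'a \<Rightarrow> 'a set" where
  "max_above x = {m \<in> tops F le. le x m}"

lemma max_above_subset: "max_above x \<subseteq> F"
  using tops_subset by (auto simp: max_above_def)

lemma max_above_up: "c \<in> max_above x \<Longrightarrow> c \<in> up F le x"
  using tops_subset by (auto simp: max_above_def up_def)

lemma max_above_top: "m \<in> tops F le \<Longrightarrow> max_above m = {m}"
  unfolding max_above_def tops_def using F_refl by blast

lemma max_above_antimono: "x \<in> F \<Longrightarrow> y \<in> F \<Longrightarrow> le x y \<Longrightarrow> max_above y \<subseteq> max_above x"
  unfolding max_above_def tops_def using F_trans by blast

lemma max_above_nonempty: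
  assumes x: "x \<in> F"
  shows "max_above x \<noteq> {}"
proof -
  obtain m where m: "m \<in> up F le x"
    and least: "\<And>z. z \<in> up F le x \<Longrightarrow> card (up F le m) \<le> card (up F le z)"
    using ex_has_least_nat[of "\<lambda>z. z \<in> up F le x" x "\<lambda>z. card (up F le z)"] self_in_up[OF x]
    by blast
  have mF: "m \<in> F" "le x m" using m by (auto simp: up_def)
  have "z = m" if z: "z \<in> F" "le m z" for z
  proof (rule ccontr)
    assume "z \<noteq> m"
    then have "m \<notin> up F le z" using z mF F_antisym by (auto simp: up_def)
    then have "up F le z \<subset> up F le m"
      using up_antimono[OF mF(1) z] self_in_up[OF mF(1)] by blast
    then have "card (up F le z) < card (up F le m)" by (intro psubset_card_mono finite_up)
    moreover have "z \<in> up F le x" using F_trans[OF x mF(1) z(1) mF(2) z(2)] z by (simp add: up_def)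
    ultimately show False using least[of z] by linarith
  qed
  then have "m \<in> max_above x" using mF by (auto simp: max_above_def tops_def)
  then show ?thesis by blast
qed

definition depth_le :: "'a \<Rightarrow> nat \<Rightarrow> bool" where
  "depth_le x k \<longleftrightarrow> (\<forall>C. C \<subseteq> up F le x \<and> is_chain le C \<longrightarrow> card C \<le> Suc k)"

lemma depth_le_mono:
  assumes "depth_le x k" "k \<le> k'"
  shows "depth_le x k'"
  unfolding depth_le_def
proof (intro allI impI)
  fix C assume "C \<subseteq> up F le x \<and> is_chain le C"
  then have "card C \<le> Suc k" using assms(1) unfolding depth_le_def by blast
  then show "card C \<le> Suc k'" using assms(2) by simp
qed

lemma depth_le_if_has_height:
  assumes "has_height F le n"
  shows "depth_le x n"
  unfolding depth_le_def
proof (intro allI impI)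
  fix C assume "C \<subseteq> up F le x \<and> is_chain le C"
  then have "card C \<le> n + 1" using assms up_subset unfolding has_height_def by blast
  then show "card C \<le> Suc n" by simp
qed

lemma depth_le_successor:
  assumes x: "x \<in> F" and depth: "depth_le x (Suc k)" and y: "y \<in> F" "le x y" "y \<noteq> x"
  shows "depth_le y k"
  unfolding depth_le_def
proof (intro allI impI)
  fix C assume C: "C \<subseteq> up F le y \<and> is_chain le C"
  have CF: "C \<subseteq> F" using C up_subset by blast
  have x_le: "\<forall>c\<in>C. le x c" using C F_trans[OF x y(1) _ y(2)] by (auto simp: up_def)
  have x_notin: "x \<notin> C" using C F_antisym[OF x y(1) y(2)] y(3) by (auto simp: up_def)
  have "insert x C \<subseteq> up F le x" using CF x_le self_in_up[OF x] by (auto simp: up_def)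
  moreover have "is_chain le (insert x C)" using C x_le F_refl[OF x] by (auto simp: is_chain_def)
  ultimately have "card (insert x C) \<le> Suc (Suc k)" using depth unfolding depth_le_def by blast
  moreover have "finite C" using CF finite_F by (rule finite_subset)
  ultimately show "card C \<le> Suc k" using x_notin by simp
qed

lemma depth_le_top:
  assumes "m \<in> tops F le"
  shows "depth_le m k"
  unfolding depth_le_def
proof (intro allI impI)
  fix C assume "C \<subseteq> up F le m \<and> is_chain le C"
  then have "C \<subseteq> {m}" using up_top[OF assms] by simp
  then have "card C \<le> card {m}" by (intro card_mono) auto
  then show "card C \<le> Suc k" by simp
qed

lemma top_if_depth_le_0:
  assumes x: "x \<in> F" and depth: "depth_le x 0"
  shows "x \<in> tops F le"
proof -
  have "z = x" if z: "z \<in> F" "le x z" for z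
  proof (rule ccontr)
    assume ne: "z \<noteq> x"
    have "{x, z} \<subseteq> up F le x" "is_chain le {x, z}"
      using x z F_refl[OF x] F_refl[OF z(1)] by (auto simp: up_def is_chain_def)
    then have "card {x, z} \<le> Suc 0" using depth unfolding depth_le_def by blast
    then show False using ne by simp
  qed
  then show ?thesis using x by (simp add: tops_def)
qed

lemma successor_top_if_depth_le_1:
  "x \<in> F \<Longrightarrow> depth_le x 1 \<Longrightarrow> y \<in> up F le x - {x} \<Longrightarrow> y \<in> tops F le"
  using depth_le_successor[of x 0 y] top_if_depth_le_0 by (auto simp: up_def)

lemma depth_le_1_if_successors_top:
  assumes x: "x \<in> F" and succ: "\<forall>y \<in> up F le x - {x}. y \<in> tops F le"
  shows "depth_le x 1"
  unfolding depth_le_def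
proof (intro allI impI)
  fix C assume C: "C \<subseteq> up F le x \<and> is_chain le C"
  have fin: "finite (C - {x})" using C finite_up by (blast intro: rev_finite_subset)
  have "y = z" if "y \<in> C - {x}" "z \<in> C - {x}" for y z
    using that C succ up_subset unfolding is_chain_def tops_def by blast
  then have "card (C - {x}) \<le> Suc 0" using fin card_le_Suc0_iff_eq by blast
  moreover have "card C \<le> Suc (card (C - {x}))"
    using fin card_Suc_Diff1[of C x] by (cases "x \<in> C") auto
  ultimately show "card C \<le> Suc 1" by simp
qed

lemma proper_up_closed:
  assumes x: "x \<in> F" and z: "z \<in> up F le x - {x}" and w: "w \<in> F" "le z w"
  shows "w \<in> up F le x - {x}"
proof -
  have zF: "z \<in> F" "le x z" "z \<noteq> x" using z by (auto simp: up_def)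
  have "le x w" using F_trans[OF x zF(1) w(1) zF(2) w(2)] .
  moreover have "w \<noteq> x" using F_antisym[OF zF(1) x] zF w by blast
  ultimately show ?thesis using w by (simp add: up_def)
qed

lemma max_above_proper: "x \<notin> tops F le \<Longrightarrow> a \<in> max_above x \<Longrightarrow> a \<in> up F le x - {x}"
  using tops_subset by (auto simp: max_above_def up_def)

lemma image_up_tops_indicator:
  assumes z: "z \<in> F"
  shows "(\<lambda>w. if w \<in> tops F le then 2 else 1 :: nat) ` up F le z =
    (if z \<in> tops F le then {2} else {1, 2})"
proof (cases "z \<in> tops F le")
  case True
  then show ?thesis by (simp add: up_top)
next
  case False
  obtain t where "t \<in> max_above z" using max_above_nonempty[OF z] by blast
  then have "t \<in> up F le z" "t \<in> tops F le" using max_above_up by (auto simp: max_above_def)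
  then have "2 \<in> (\<lambda>w. if w \<in> tops F le then 2 else 1 :: nat) ` up F le z"
    by (intro rev_image_eqI[of t]) simp_all
  moreover have "1 \<in> (\<lambda>w. if w \<in> tops F le then 2 else 1 :: nat) ` up F le z"
    using self_in_up[OF z] False by (intro rev_image_eqI[of z]) simp_all
  ultimately show ?thesis using False by auto
qed

lemma is_upset_successors_avoiding:
  assumes x: "x \<in> F"
  shows "is_upset F le {z \<in> up F le x - {x}. max_above z \<inter> R = {}}"
  unfolding is_upset_def
proof (intro conjI ballI impI)
  show "{z \<in> up F le x - {x}. max_above z \<inter> R = {}} \<subseteq> F" using up_subset by blast
  fix z w assume z: "z \<in> {z \<in> up F le x - {x}. max_above z \<inter> R = {}}" and w: "w \<in> F" "le z w"
  have "z \<in> F" using z up_subset by blast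
  then have "max_above w \<subseteq> max_above z" using max_above_antimono w by blast
  moreover have "w \<in> up F le x - {x}" using proper_up_closed[OF x _ w] z by simp
  ultimately show "w \<in> {z \<in> up F le x - {x}. max_above z \<inter> R = {}}" using z by auto
qed

lemma is_upset_successors_meeting:
  assumes x: "x \<in> F"
    and closed: "\<forall>z \<in> up F le x - {x}. max_above z \<inter> R \<noteq> {} \<longrightarrow> max_above z \<subseteq> R"
  shows "is_upset F le {z \<in> up F le x - {x}. max_above z \<inter> R \<noteq> {}}"
  unfolding is_upset_def
proof (intro conjI ballI impI)
  show "{z \<in> up F le x - {x}. max_above z \<inter> R \<noteq> {}} \<subseteq> F" using up_subset by blast
  fix z w assume z: "z \<in> {z \<in> up F le x - {x}. max_above z \<inter> R \<noteq> {}}" and w: "w \<in> F" "le z w"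
  obtain d where d: "d \<in> max_above w" using max_above_nonempty[OF w(1)] by blast
  have "z \<in> F" using z up_subset by blast
  then have "d \<in> R" using closed z d max_above_antimono w by blast
  moreover have "w \<in> up F le x - {x}" using proper_up_closed[OF x _ w] z by simp
  ultimately show "w \<in> {z \<in> up F le x - {x}. max_above z \<inter> R \<noteq> {}}" using d by auto
qed

lemma up_scott:
  "up scott scott_le 0 = {0, 1, 2, 3}" "up scott scott_le 1 = {1, 2}"
  "up scott scott_le 2 = {2}" "up scott scott_le 3 = {3}"
  by (auto simp: up_def scott_def scott_le_def)

definition scott_collapse :: "'a \<Rightarrow> 'a set \<Rightarrow> 'a \<Rightarrow> nat" where
  "scott_collapse x Q z =
    (if z = x then 0 else if z \<in> Q then 3 else if z \<in> tops F le then 2 else 1)"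

lemma image_up_scott_collapse:
  assumes split: "P \<union> Q = up F le x - {x}" "P \<inter> Q = {}"
    and upsets: "is_upset F le P" "is_upset F le Q" and z: "z \<in> P \<union> Q"
  shows "scott_collapse x Q ` up F le z = up scott scott_le (scott_collapse x Q z)"
  using z
proof
  assume z: "z \<in> P"
  have up_P: "up F le z \<subseteq> P" "z \<in> F" using z upsets(1) unfolding is_upset_def up_def by blast+
  have on_P: "scott_collapse x Q w = (if w \<in> tops F le then 2 else 1)" if "w \<in> P" for w
    using that split by (auto simp: scott_collapse_def)
  then have "scott_collapse x Q ` up F le z = (\<lambda>w. if w \<in> tops F le then 2 else 1) ` up F le z"
    using up_P(1) by (intro image_cong) auto
  also have "\<dots> = (if z \<in> tops F le then {2} else {1, 2})"
    by (rule image_up_tops_indicator[OF up_P(2)])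
  finally show ?thesis using on_P[OF z] up_scott(2,3) by (cases "z \<in> tops F le") simp_all
next
  assume z: "z \<in> Q"
  have up_Q: "up F le z \<subseteq> Q" "z \<in> F" using z upsets(2) unfolding is_upset_def up_def by blast+
  have on_up: "scott_collapse x Q w = 3" if "w \<in> up F le z" for w
    using that up_Q(1) split by (auto simp: scott_collapse_def)
  then have "scott_collapse x Q ` up F le z = {3}"
    using self_in_up[OF up_Q(2)] by (auto intro: rev_image_eqI)
  then show ?thesis using on_up[OF self_in_up[OF up_Q(2)]] up_scott(4) by simp
qed

lemma refutes_jankov_fine:
  assumes x: "x \<in> F"
    and onto: "f ` up F le x = Q"
    and local: "\<And>y. y \<in> up F le x \<Longrightarrow> f ` up F le y = up Q leQ (f y)"
  shows "\<not> validates_jankov_fine F le Q leQ"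
proof -
  have up_up: "up (up F le x) le y = up F le y" if "y \<in> up F le x" for y
    using that F_trans[OF x] by (auto simp: up_def)
  have "surj_p_morphism (up F le x) le Q leQ f"
    unfolding surj_p_morphism_def p_morphism_def
  proof (intro conjI ballI)
    fix y assume y: "y \<in> up F le x"
    show "f y \<in> Q" using onto y by blast
    show "f ` up (up F le x) le y = up Q leQ (f y)" using local[OF y] up_up[OF y] by simp
  qed (rule onto)
  then show ?thesis using up_is_upset[OF x] unfolding validates_jankov_fine_def by blast
qed

end

section \<open>Frames validating PL\<close>

locale PL_frame = finite_poset +
  assumes validates_PL: "validates_PL F le"
begin

lemma no_scott_split:
  assumes x: "x \<in> F"
    and split: "P \<union> Q = up F le x - {x}" "P \<inter> Q = {}"
    and upsets: "is_upset F le P" "is_upset F le Q"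
    and y: "y \<in> P" "y \<notin> tops F le"
    and q: "q \<in> Q"
  shows False
proof -
  let ?f = "scott_collapse x Q"
  have "?f y = 1" "?f q = 3" "?f x = 0" using y q split by (auto simp: scott_collapse_def)
  then have "?f ` up F le y = {1, 2}" "?f ` up F le q = {3}"
    using image_up_scott_collapse[OF split upsets, of y]
      image_up_scott_collapse[OF split upsets, of q]
      y(1) q up_scott(2,4) by simp_all
  moreover have "?f ` up F le y \<subseteq> ?f ` P" "?f ` up F le q \<subseteq> ?f ` Q"
    using y(1) q upsets unfolding is_upset_def up_def by blast+
  moreover have "?f ` P \<subseteq> {1, 2}" "?f ` Q \<subseteq> {3}" using split by (auto simp: scott_collapse_def)
  ultimately have "?f ` P = {1, 2}" "?f ` Q = {3}" by blast+
  moreover have "up F le x = insert x (P \<union> Q)" using split self_in_up[OF x] by blast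
  ultimately have onto: "?f ` up F le x = scott"
    using \<open>?f x = 0\<close> by (simp add: image_Un insert_commute scott_def)
  have "?f ` up F le z = up scott scott_le (?f z)" if "z \<in> up F le x" for z
  proof (cases "z = x")
    case True
    then show ?thesis using onto up_scott(1) \<open>?f x = 0\<close> by (simp add: scott_def)
  next
    case False
    then show ?thesis using that split image_up_scott_collapse[OF split upsets] by blast
  qed
  then show False using refutes_jankov_fine[OF x onto] validates_PL by (simp add: validates_PL_def)
qed

text \<open>A set of maximal points closed under sharing a proper successor of \<open>x\<close> is all or nothing:
  otherwise the proper successors of \<open>x\<close> would split into two upsets, one of them containing a
  non-maximal point, and collapsing that configuration gives the Scott frame.\<close>
lemma max_above_subset_if_closed:
  assumes x: "x \<in> F" and y: "y \<in> up F le x - {x}" "y \<notin> tops F le"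
    and closed: "\<forall>z \<in> up F le x - {x}. max_above z \<inter> R \<noteq> {} \<longrightarrow> max_above z \<subseteq> R"
    and a: "a \<in> max_above x" "a \<in> R"
  shows "max_above x \<subseteq> R"
proof
  fix b assume b: "b \<in> max_above x"
  show "b \<in> R"
  proof (rule ccontr)
    assume "b \<notin> R"
    define P where "P = {z \<in> up F le x - {x}. max_above z \<inter> R \<noteq> {}}"
    define Q where "Q = {z \<in> up F le x - {x}. max_above z \<inter> R = {}}"
    have split: "P \<union> Q = up F le x - {x}" "P \<inter> Q = {}"
      and split': "Q \<union> P = up F le x - {x}" "Q \<inter> P = {}"
      unfolding P_def Q_def by blast+
    have upsets: "is_upset F le P" "is_upset F le Q"
      unfolding P_def Q_def
      using is_upset_successors_meeting[OF x closed] is_upset_successors_avoiding[OF x] by blast+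
    have "x \<notin> tops F le" using y by (auto simp: tops_def up_def)
    then have "a \<in> P" "b \<in> Q"
      using a b \<open>b \<notin> R\<close> max_above_proper max_above_top by (auto simp: P_def Q_def max_above_def)
    consider "y \<in> P" | "y \<in> Q" using split y(1) by blast
    then show False
    proof cases
      case 1
      show False by (rule no_scott_split[OF x split upsets 1 y(2) \<open>b \<in> Q\<close>])
    next
      case 2
      show False by (rule no_scott_split[OF x split' upsets(2,1) 2 y(2) \<open>a \<in> P\<close>])
    qed
  qed
qed

lemma up_fork3:
  "up fork3 fork3_le 0 = fork3" "k \<in> fork3 - {0} \<Longrightarrow> up fork3 fork3_le k = {k}"
  by (auto simp: up_def fork3_def fork3_le_def)

lemma no_fork:
  assumes x: "x \<in> F" and succ_tops: "up F le x - {x} \<subseteq> tops F le"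
    and abc: "{a, b, c} \<subseteq> up F le x - {x}" "a \<noteq> b" "a \<noteq> c" "b \<noteq> c"
  shows False
proof -
  define f where "f z = (if z = x then 0 else if z = a then 1 else if z = b then 2 else (3::nat))"
    for z
  have onto: "f ` up F le x = fork3"
  proof
    show "f ` up F le x \<subseteq> fork3" by (auto simp: f_def fork3_def)
    have "f ` {x, a, b, c} = fork3" using abc by (auto simp: f_def fork3_def)
    moreover have "{x, a, b, c} \<subseteq> up F le x" using abc self_in_up[OF x] by blast
    ultimately show "fork3 \<subseteq> f ` up F le x" by (metis image_mono)
  qed
  have "f ` up F le z = up fork3 fork3_le (f z)" if z: "z \<in> up F le x" for z
  proof (cases "z = x")
    case True
    then show ?thesis using onto up_fork3(1) by (simp add: f_def)
  next
    case False
    then have "z \<in> tops F le" "f z \<in> fork3 - {0}" using z succ_tops by (auto simp: f_def fork3_def)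
    then show ?thesis using up_top up_fork3(2) by simp
  qed
  then show False
    using refutes_jankov_fine[OF x onto] validates_PL by (simp add: validates_PL_def)
qed

lemma depth_one_cover:
  assumes x: "x \<in> F" and depth: "depth_le x 1"
    and cd: "c \<in> max_above x" "d \<in> max_above x" "c \<noteq> d"
  shows "up F le x = {x, c, d}"
proof -
  have succ_tops: "up F le x - {x} \<subseteq> tops F le"
    using successor_top_if_depth_le_1[OF x depth] by blast
  have "x \<notin> tops F le" using cd max_above_top by auto
  then have "{c, d} \<subseteq> up F le x - {x}" using cd max_above_proper by blast
  then have "w \<in> {x, c, d}" if "w \<in> up F le x" for w
    using no_fork[OF x succ_tops, of c d w] that cd(3) by blast
  moreover have "{x, c, d} \<subseteq> up F le x"
    using \<open>{c, d} \<subseteq> up F le x - {x}\<close> self_in_up[OF x] by blast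
  ultimately show ?thesis by blast
qed

text \<open>A node of the tree constructed below at distance \<open>h\<close> from the leaves carries a label
  \<open>(x, a, b)\<close>: it is mapped to \<open>x\<close>, while \<open>a\<close> and \<open>b\<close> are the images of the teeth just left
  and right of its leaves. For \<open>h = 0\<close> the node is a leaf, and its upset together with the two
  adjacent teeth must map onto \<open>\<up>x\<close>.\<close>
fun admissible :: "nat \<Rightarrow> 'a label \<Rightarrow> bool" where
  "admissible h (x, a, b) \<longleftrightarrow> x \<in> F \<and> a \<in> max_above x \<and> b \<in> max_above x \<and>
     depth_le x (Suc h) \<and> (h = 0 \<longrightarrow> up F le x = {x, a, b})"

fun label_path :: "'a \<Rightarrow> 'a label list \<Rightarrow> 'a \<Rightarrow> bool" where
  "label_path a [] b \<longleftrightarrow> a = b"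
| "label_path a ((y, c, d) # cs) b \<longleftrightarrow> c = a \<and> label_path d cs b"

definition labels_above :: "nat \<Rightarrow> 'a \<Rightarrow> 'a label list \<Rightarrow> bool" where
  "labels_above h x cs \<longleftrightarrow> (\<forall>s \<in> set cs. admissible h s \<and> le x (fst s))"

definition linked :: "nat \<Rightarrow> 'a \<Rightarrow> 'a \<Rightarrow> 'a \<Rightarrow> bool" where
  "linked h x c d \<longleftrightarrow> (\<exists>cs. label_path c cs d \<and> labels_above h x cs)"

lemma label_path_append: "label_path a xs b \<Longrightarrow> label_path b ys c \<Longrightarrow> label_path a (xs @ ys) c"
  by (induction a xs b rule: label_path.induct) auto

lemma labels_above_append [simp]:
  "labels_above h x (xs @ ys) \<longleftrightarrow> labels_above h x xs \<and> labels_above h x ys"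
  by (auto simp: labels_above_def)

lemma labels_above_Cons [simp]:
  "labels_above h x (s # cs) \<longleftrightarrow> admissible h s \<and> le x (fst s) \<and> labels_above h x cs"
  by (auto simp: labels_above_def)

lemma labels_above_Nil [simp]: "labels_above h x []"
  by (simp add: labels_above_def)

lemma linked_refl: "linked h x a a"
  unfolding linked_def by (intro exI[of _ "[]"]) simp

lemma linked_trans: "linked h x a b \<Longrightarrow> linked h x b c \<Longrightarrow> linked h x a c"
  unfolding linked_def by (metis label_path_append labels_above_append)

lemma linked_single: "admissible h (y, c, d) \<Longrightarrow> le x y \<Longrightarrow> linked h x c d"
  unfolding linked_def by (intro exI[of _ "[(y, c, d)]"]) simp

lemma admissible_top: "m \<in> tops F le \<Longrightarrow> admissible h (m, m, m)"
  using max_above_top depth_le_top up_top tops_subset by auto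

lemma ex_admissible_label:
  assumes z: "z \<in> F" "depth_le z (Suc h)" and c: "c \<in> max_above z"
  shows "\<exists>d. admissible h (z, c, d)"
proof (cases "\<exists>d \<in> max_above z. d \<noteq> c")
  case True
  then obtain d where d: "d \<in> max_above z" "d \<noteq> c" by blast
  have "h = 0 \<longrightarrow> up F le z = {z, c, d}" using depth_one_cover z c d by auto
  then show ?thesis using z c d by auto
next
  case False
  have "up F le z = {z, c, c}" if "h = 0"
  proof
    show "up F le z \<subseteq> {z, c, c}"
    proof
      fix w assume w: "w \<in> up F le z"
      show "w \<in> {z, c, c}"
      proof (cases "w = z")
        case False
        then have "w \<in> tops F le"
          using successor_top_if_depth_le_1[OF z(1)] z(2) w \<open>h = 0\<close> by simp
        then have "w \<in> max_above z" using w by (simp add: max_above_def up_def)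
        then show ?thesis using \<open>\<not> (\<exists>d \<in> max_above z. d \<noteq> c)\<close> by blast
      qed simp
    qed
    show "{z, c, c} \<subseteq> up F le z" using self_in_up[OF z(1)] max_above_up[OF c] by blast
  qed
  then show ?thesis using z c by auto
qed

lemma linked_at_successor:
  assumes x: "x \<in> F" "depth_le x (Suc (Suc h))" and z: "z \<in> F" "le x z" "z \<noteq> x"
    and cd: "c \<in> max_above z" "d \<in> max_above z"
  shows "linked h x c d"
proof (cases "c = d")
  case True
  then show ?thesis by (simp add: linked_refl)
next
  case False
  have "depth_le z (Suc h)" using depth_le_successor x z by blast
  moreover have "h = 0 \<longrightarrow> up F le z = {z, c, d}"
    using depth_one_cover[OF z(1) _ cd False] \<open>depth_le z (Suc h)\<close> by auto
  ultimately have "admissible h (z, c, d)" using z cd by simp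
  then show ?thesis using z(2) by (rule linked_single)
qed

lemma linked_if_nontop_successor:
  assumes x: "x \<in> F" "depth_le x (Suc (Suc h))"
    and y: "y \<in> up F le x - {x}" "y \<notin> tops F le"
    and ab: "a \<in> max_above x" "b \<in> max_above x"
  shows "linked h x a b"
proof -
  have "max_above z \<subseteq> {c. linked h x a c}"
    if "z \<in> up F le x - {x}" "c \<in> max_above z" "linked h x a c" for z c
  proof
    fix d assume "d \<in> max_above z"
    moreover have "z \<in> F" "le x z" "z \<noteq> x" using that(1) by (auto simp: up_def)
    ultimately have "linked h x c d" using linked_at_successor[OF x] that(2) by blast
    then show "d \<in> {c. linked h x a c}" using linked_trans[OF that(3)] by blast
  qed
  then have "\<forall>z \<in> up F le x - {x}. max_above z \<inter> {c. linked h x a c} \<noteq> {} \<longrightarrow>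
      max_above z \<subseteq> {c. linked h x a c}"
    by blast
  then have "max_above x \<subseteq> {c. linked h x a c}"
    by (rule max_above_subset_if_closed[OF x(1) y _ ab(1)]) (simp add: linked_refl)
  then show ?thesis using ab(2) by blast
qed

lemma covering_label_path:
  assumes x: "x \<in> F" "depth_le x (Suc (Suc h))"
    and y: "y \<in> up F le x - {x}" "y \<notin> tops F le"
  shows "finite Y \<Longrightarrow> Y \<subseteq> up F le x - {x} \<Longrightarrow> a \<in> max_above x \<Longrightarrow> b \<in> max_above x \<Longrightarrow>
    \<exists>cs. label_path a cs b \<and> labels_above h x cs \<and> Y \<subseteq> (\<Union>s \<in> set cs. up F le (fst s))"
proof (induction Y arbitrary: a rule: finite_induct)
  case empty
  then show ?case using linked_if_nontop_successor[OF x y] by (auto simp: linked_def)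
next
  case (insert z Y)
  have z: "z \<in> F" "le x z" "z \<noteq> x" using insert.prems(1) by (auto simp: up_def)
  obtain c where c: "c \<in> max_above z" using max_above_nonempty[OF z(1)] by blast
  obtain d where zcd: "admissible h (z, c, d)"
    using ex_admissible_label[OF z(1) depth_le_successor[OF x z] c] by blast
  have cd: "c \<in> max_above x" "d \<in> max_above x" using zcd max_above_antimono[OF x(1) z(1,2)] by auto
  obtain cs1 where cs1: "label_path a cs1 c" "labels_above h x cs1"
    using linked_if_nontop_successor[OF x y insert.prems(2) cd(1)] by (auto simp: linked_def)
  obtain cs2 where
    cs2: "label_path d cs2 b" "labels_above h x cs2" "Y \<subseteq> (\<Union>s \<in> set cs2. up F le (fst s))"
    using insert.IH[OF _ cd(2) insert.prems(3)] insert.prems(1) by auto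
  have "label_path a (cs1 @ (z, c, d) # cs2) b" using cs1 cs2 label_path_append by simp
  moreover have "z \<in> up F le z" using self_in_up[OF z(1)] .
  ultimately show ?case using cs1 cs2 zcd z
    by (intro exI[of _ "cs1 @ (z, c, d) # cs2"]) auto
qed

text \<open>The labels given to the children of a node labelled \<open>(x, a, b)\<close>. The padding labels
  \<open>(a, a, a)\<close> and \<open>(b, b, b)\<close> keep the outermost leaves of every subtree on maximal points, and
  repeating \<open>(b, b, b)\<close> lengthens a walk, so that all nodes can get the same number of children.\<close>
fun walk :: "nat \<Rightarrow> 'a label \<Rightarrow> 'a label list \<Rightarrow> bool" where
  "walk h (x, a, b) cs \<longleftrightarrow> (\<exists>mid. cs = (a, a, a) # mid @ [(b, b, b)]) \<and> label_path a cs b \<and>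
     labels_above h x cs \<and> up F le x \<subseteq> insert x (\<Union>s \<in> set cs. up F le (fst s))"

lemma walkI:
  assumes "label_path a mid b" "labels_above h x mid" "a \<in> max_above x" "b \<in> max_above x"
    and "up F le x \<subseteq> insert x (\<Union>s \<in> set mid. up F le (fst s))"
  shows "walk h (x, a, b) ((a, a, a) # mid @ [(b, b, b)])"
proof -
  have "label_path a ((a, a, a) # mid @ [(b, b, b)]) b"
    using label_path_append[OF assms(1), of "[(b, b, b)]"] by simp
  moreover have "admissible h (a, a, a)" "admissible h (b, b, b)"
    using assms(3,4) admissible_top by (auto simp: max_above_def)
  ultimately show ?thesis using assms by (auto simp: max_above_def)
qed

lemma walk_snoc:
  assumes walk: "walk h (x, a, b) cs"
  shows "walk h (x, a, b) (cs @ [(b, b, b)])"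
proof -
  obtain mid where mid: "cs = (a, a, a) # mid @ [(b, b, b)]" using walk by auto
  have path: "label_path a cs b" and above: "labels_above h x cs"
    and cover: "up F le x \<subseteq> insert x (\<Union>s \<in> set cs. up F le (fst s))"
    using walk by simp_all
  have "label_path a (cs @ [(b, b, b)]) b"
    using label_path_append[OF path, of "[(b, b, b)]"] by simp
  moreover have "labels_above h x (cs @ [(b, b, b)])"
    using above mid by (simp add: labels_above_def)
  moreover have "up F le x \<subseteq> insert x (\<Union>s \<in> set (cs @ [(b, b, b)]). up F le (fst s))"
    using cover by (rule order_trans) auto
  moreover have "cs @ [(b, b, b)] = (a, a, a) # (mid @ [(b, b, b)]) @ [(b, b, b)]" using mid by simp
  ultimately show ?thesis unfolding walk.simps by blast
qed

lemma ex_walk_if_nontop_successor: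
  assumes x: "x \<in> F" "depth_le x (Suc (Suc h))" and ab: "a \<in> max_above x" "b \<in> max_above x"
    and y: "y \<in> up F le x - {x}" "y \<notin> tops F le"
  shows "\<exists>cs. walk h (x, a, b) cs"
proof -
  have "finite (up F le x - {x})" using finite_up by simp
  then obtain mid where path: "label_path a mid b" and above: "labels_above h x mid"
    and cover: "up F le x - {x} \<subseteq> (\<Union>s \<in> set mid. up F le (fst s))"
    using covering_label_path[OF x y _ subset_refl ab] by blast
  have "up F le x \<subseteq> insert x (\<Union>s \<in> set mid. up F le (fst s))" using cover by blast
  then show ?thesis using walkI[OF path above ab] by blast
qed

lemma admissible_swap: "admissible h (x, a, b) \<Longrightarrow> admissible h (x, b, a)"
  unfolding admissible.simps by (metis insert_commute)

lemma ex_walk_if_successors_top: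
  assumes x: "x \<in> F" and ab: "a \<in> max_above x" "b \<in> max_above x"
    and succ_tops: "up F le x - {x} \<subseteq> tops F le"
  shows "\<exists>cs. walk h (x, a, b) cs"
proof -
  have "depth_le x 1" using depth_le_1_if_successors_top[OF x] succ_tops by blast
  then have depth: "depth_le x (Suc h)" by (rule depth_le_mono) simp
  have cover: "up F le x \<subseteq> insert x (\<Union>s \<in> set ((x, c, d) # cs). up F le (fst s))"
    for c d :: 'a and cs
    by auto
  show ?thesis
  proof (cases "a = b")
    case True
    obtain d where xad: "admissible h (x, a, d)"
      using ex_admissible_label[OF x depth ab(1)] by blast
    have "label_path a [(x, a, d), (x, d, a)] b" using True by simp
    moreover have "labels_above h x [(x, a, d), (x, d, a)]"
      using xad admissible_swap[OF xad] F_refl[OF x] by simp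
    ultimately show ?thesis using walkI[OF _ _ ab cover] by blast
  next
    case False
    have "h = 0 \<longrightarrow> up F le x = {x, a, b}"
      using depth_one_cover[OF x \<open>depth_le x 1\<close> ab False] by blast
    then have "labels_above h x [(x, a, b)]" using x depth ab F_refl[OF x] by simp
    moreover have "label_path a [(x, a, b)] b" by simp
    ultimately show ?thesis using walkI[OF _ _ ab cover] by blast
  qed
qed

lemma ex_walk:
  assumes "admissible (Suc h) (x, a, b)"
  shows "\<exists>cs. walk h (x, a, b) cs"
proof -
  have x: "x \<in> F" "depth_le x (Suc (Suc h))" and ab: "a \<in> max_above x" "b \<in> max_above x"
    using assms by auto
  consider (deep) y where "y \<in> up F le x - {x}" "y \<notin> tops F le"
    | (shallow) "up F le x - {x} \<subseteq> tops F le"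
    by blast
  then show ?thesis
  proof cases
    case deep
    then show ?thesis by (rule ex_walk_if_nontop_successor[OF x ab])
  next
    case shallow
    then show ?thesis by (rule ex_walk_if_successors_top[OF x(1) ab])
  qed
qed

lemma ex_uniform_walks:
  "\<exists>B \<ge> 2. \<exists>children. \<forall>h < K. \<forall>s. admissible (Suc h) s \<longrightarrow>
     walk h s (children h s) \<and> length (children h s) = B"
proof -
  define S where "S = {(h, s). h < K \<and> admissible (Suc h) s}"
  define P where "P p k \<longleftrightarrow> (\<exists>cs. walk (fst p) (snd p) cs \<and> length cs = k)" for p k
  have "S \<subseteq> {..<K} \<times> (F \<times> F \<times> F)"
    by (auto simp: S_def dest: max_above_subset[THEN subsetD])
  then have "finite S" by (rule finite_subset) (simp add: finite_F)
  moreover have "\<exists>k. P p k" if p_S: "p \<in> S" for p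
  proof -
    obtain h x a b where p: "p = (h, x, a, b)" by (cases p) auto
    then have "admissible (Suc h) (x, a, b)" using p_S by (simp add: S_def del: admissible.simps)
    then obtain cs where "walk h (x, a, b) cs" using ex_walk by blast
    then show ?thesis using p by (auto simp: P_def simp del: walk.simps)
  qed
  moreover have "P p (Suc k)" if Pk: "P p k" for p k
  proof -
    obtain cs where "walk (fst p) (snd p) cs" "length cs = k" using Pk by (auto simp: P_def)
    moreover obtain x a b where "snd p = (x, a, b)" by (cases "snd p") auto
    ultimately show ?thesis using walk_snoc unfolding P_def by (metis length_append_singleton)
  qed
  ultimately obtain B where B: "B \<ge> 2" "\<forall>p \<in> S. P p B"
    using ex_common_bound[of S P 2] by blast
  then obtain pick where "\<forall>p \<in> S. walk (fst p) (snd p) (pick p) \<and> length (pick p) = B"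
    using bchoice[of S "\<lambda>p cs. walk (fst p) (snd p) cs \<and> length cs = B"] by (auto simp: P_def)
  then show ?thesis
    using B(1) by (intro exI[of _ B] conjI exI[of _ "\<lambda>h s. pick (h, s)"]) (auto simp: S_def)
qed

lemma label_path_nth:
  "label_path a cs b \<Longrightarrow> Suc p < length cs \<Longrightarrow> snd (snd (cs ! p)) = fst (snd (cs ! Suc p))"
proof (induction a cs b arbitrary: p rule: label_path.induct)
  case (2 a y c d cs b)
  then show ?case by (cases p; cases cs) auto
qed simp

lemma walk_first: "walk h s cs \<Longrightarrow> cs ! 0 = (fst (snd s), fst (snd s), fst (snd s))"
  by (cases s) auto

lemma walk_last:
  "walk h s cs \<Longrightarrow> cs ! (length cs - 1) = (snd (snd s), snd (snd s), snd (snd s))"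
  by (cases s) (auto simp: nth_append)

lemma walk_label_path: "walk h s cs \<Longrightarrow> label_path (fst (snd s)) cs (snd (snd s))"
  by (cases s) auto

lemma walk_labels_above: "walk h s cs \<Longrightarrow> labels_above h (fst s) cs"
  by (cases s) auto

lemma walk_covers: "walk h s cs \<Longrightarrow> up F le (fst s) \<subseteq> insert (fst s) (\<Union>c \<in> set cs. up F le (fst c))"
  by (cases s) auto

end

section \<open>Complete trees and their saws\<close>

lemma div_power_add: "(a::nat) div B ^ (d + e) = a div B ^ e div B ^ d"
  by (metis div_mult2_eq power_add mult.commute)

lemma up_sawed_Inl:
  "u \<in> T \<Longrightarrow> up (sawed_carrier T ts) (sawed_le le ts) (Inl u) =
     Inl ` up T le u \<union> Inr ` {i. Suc i < length ts \<and> (le u (ts ! i) \<or> le u (ts ! Suc i))}"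
  by (auto simp: up_def sawed_carrier_def)

lemma up_sawed_Inr:
  "Suc i < length ts \<Longrightarrow> up (sawed_carrier T ts) (sawed_le le ts) (Inr i) = {Inr i}"
  by (auto simp: up_def sawed_carrier_def)

lemma finite_sawed_carrier:
  assumes "finite T"
  shows "finite (sawed_carrier T ts)"
proof -
  have "finite {i. Suc i < length ts}" by (rule finite_subset[of _ "{..<length ts}"]) auto
  then show ?thesis using assms by (simp add: sawed_carrier_def)
qed

lemma card_sawed_chain_le:
  assumes T: "finite T" and C: "C \<subseteq> sawed_carrier T ts" "is_chain (sawed_le le ts) C"
    and bound: "\<And>D. D \<subseteq> T \<Longrightarrow> is_chain le D \<Longrightarrow> card D \<le> Suc n"
  shows "card C \<le> Suc (Suc n)"
proof -
  define D where "D = Inl -` C"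
  define I where "I = Inr -` C"
  have C_eq: "C = Inl ` D \<union> Inr ` I"
  proof
    show "C \<subseteq> Inl ` D \<union> Inr ` I"
    proof
      fix z assume "z \<in> C"
      then show "z \<in> Inl ` D \<union> Inr ` I" by (cases z) (auto simp: D_def I_def)
    qed
  qed (auto simp: D_def I_def)
  have "finite C" using C(1) finite_sawed_carrier[OF T] by (rule finite_subset)
  then have fin: "finite D" "finite I"
    unfolding D_def I_def by (simp_all add: finite_vimageI)
  have "D \<subseteq> T" using C(1) by (auto simp: D_def sawed_carrier_def)
  moreover have "is_chain le D"
    unfolding is_chain_def
  proof (intro ballI)
    fix u v assume "u \<in> D" "v \<in> D"
    then have "sawed_le le ts (Inl u) (Inl v) \<or> sawed_le le ts (Inl v) (Inl u)"
      using C(2) unfolding is_chain_def D_def by blast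
    then show "le u v \<or> le v u" by simp
  qed
  ultimately have "card D \<le> Suc n" by (rule bound)
  moreover have "i = k" if "i \<in> I" "k \<in> I" for i k
  proof -
    have "sawed_le le ts (Inr i) (Inr k) \<or> sawed_le le ts (Inr k) (Inr i)"
      using that C(2) unfolding is_chain_def I_def by blast
    then show ?thesis by auto
  qed
  then have "card I \<le> Suc 0" using fin(2) card_le_Suc0_iff_eq by blast
  moreover have "card C \<le> card D + card I"
  proof -
    have "card C \<le> card (Inl ` D :: ('a + nat) set) + card (Inr ` I :: ('a + nat) set)"
      unfolding C_eq by (rule card_Un_le)
    then show ?thesis by (simp add: card_image)
  qed
  ultimately show ?thesis by simp
qed

locale complete_tree =
  fixes B H :: nat
  assumes two_le_B: "2 \<le> B" and H_pos: "0 < H"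
begin

text \<open>The \<open>j\<close>-th node from the left on level \<open>l\<close> of the complete \<open>B\<close>-ary tree of height \<open>H\<close>
  is coded by a natural number; its children are the nodes \<open>j * B + p\<close>, \<open>p < B\<close>, on
  level \<open>l + 1\<close>.\<close>
definition node :: "nat \<Rightarrow> nat \<Rightarrow> nat" where
  "node l j = prod_encode (l, j)"

definition level :: "nat \<Rightarrow> nat" where
  "level u = fst (prod_decode u)"

definition index :: "nat \<Rightarrow> nat" where
  "index u = snd (prod_decode u)"

definition nodes :: "nat set" where
  "nodes = {u. level u \<le> H \<and> index u < B ^ level u}"

definition tree_le :: "nat \<Rightarrow> nat \<Rightarrow> bool" where
  "tree_le u v \<longleftrightarrow> level u \<le> level v \<and> index v div B ^ (level v - level u) = index u"

definition leaves :: "nat list" where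
  "leaves = map (node H) [0..<B ^ H]"

lemma level_node [simp]: "level (node l j) = l"
  by (simp add: level_def node_def)

lemma index_node [simp]: "index (node l j) = j"
  by (simp add: index_def node_def)

lemma node_level_index [simp]: "node (level u) (index u) = u"
  by (simp add: level_def index_def node_def)

lemma node_eq_iff: "node l j = node l' j' \<longleftrightarrow> l = l' \<and> j = j'"
  by (metis level_node index_node)

lemma node_in_nodes_iff: "node l j \<in> nodes \<longleftrightarrow> l \<le> H \<and> j < B ^ l"
  by (simp add: nodes_def)

lemma tree_le_node: "tree_le u (node l j) \<longleftrightarrow> level u \<le> l \<and> j div B ^ (l - level u) = index u"
  by (simp add: tree_le_def)

lemma B_pos: "0 < B"
  using two_le_B by simp

lemma div_B_less: "j < B ^ Suc l \<Longrightarrow> j div B < B ^ l"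
  using B_pos by (simp add: div_less_iff_less_mult mult.commute)

lemma two_le_leaf_count: "2 \<le> B ^ H"
proof -
  have "B ^ 1 \<le> B ^ H" using H_pos B_pos by (intro power_increasing) auto
  then show ?thesis using two_le_B by simp
qed

lemma length_leaves [simp]: "length leaves = B ^ H"
  by (simp add: leaves_def)

lemma nth_leaves: "i < B ^ H \<Longrightarrow> leaves ! i = node H i"
  by (simp add: leaves_def)

lemma finite_nodes: "finite nodes"
proof -
  have "nodes \<subseteq> (\<lambda>(l, j). node l j) ` ({..H} \<times> {..<B ^ H})"
  proof
    fix u assume u: "u \<in> nodes"
    have "B ^ level u \<le> B ^ H" using u B_pos by (intro power_increasing) (auto simp: nodes_def)
    then have "index u < B ^ H" using u by (auto simp: nodes_def)
    then show "u \<in> (\<lambda>(l, j). node l j) ` ({..H} \<times> {..<B ^ H})"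
      using u node_level_index[of u] by (force simp: nodes_def)
  qed
  then show ?thesis by (rule finite_subset) auto
qed

lemma tree_le_refl: "tree_le u u"
  by (simp add: tree_le_def)

lemma tree_le_antisym: "tree_le u v \<Longrightarrow> tree_le v u \<Longrightarrow> u = v"
  by (metis node_level_index tree_le_def le_antisym diff_self_eq_0 power_0 div_by_1)

lemma tree_le_trans:
  assumes "tree_le u v" "tree_le v w"
  shows "tree_le u w"
proof -
  have "level w - level u = (level v - level u) + (level w - level v)"
    using assms by (simp add: tree_le_def)
  then have "index w div B ^ (level w - level u)
      = index w div B ^ (level w - level v) div B ^ (level v - level u)"
    using div_power_add by simp
  then show ?thesis using assms by (simp add: tree_le_def)
qed

lemma root_in_nodes: "node 0 0 \<in> nodes"
  by (simp add: node_in_nodes_iff)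

lemma tree_le_root: "u \<in> nodes \<Longrightarrow> tree_le (node 0 0) u"
  by (simp add: tree_le_def nodes_def)

lemma chain_down: "is_chain tree_le (down nodes tree_le u)"
  unfolding is_chain_def down_def
proof (intro ballI)
  fix v w assume "v \<in> {y \<in> nodes. tree_le y u}" "w \<in> {y \<in> nodes. tree_le y u}"
  then have v: "level v \<le> level u" "index u div B ^ (level u - level v) = index v"
    and w: "level w \<le> level u" "index u div B ^ (level u - level w) = index w"
    by (auto simp: tree_le_def)
  show "tree_le v w \<or> tree_le w v"
  proof (cases "level v \<le> level w")
    case True
    then have "level u - level v = (level w - level v) + (level u - level w)" using w by simp
    then have "index v = index w div B ^ (level w - level v)" using v w div_power_add by metis
    then show ?thesis using True by (simp add: tree_le_def)
  next
    case False
    then have "level u - level w = (level v - level w) + (level u - level v)" using v by simp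
    then have "index w = index v div B ^ (level v - level w)" using v w div_power_add by metis
    then show ?thesis using False by (simp add: tree_le_def)
  qed
qed

lemma finite_tree_nodes: "finite_tree nodes tree_le"
  unfolding finite_tree_def finite_rooted_poset_def is_poset_def is_root_def
  using finite_nodes tree_le_refl tree_le_antisym tree_le_trans root_in_nodes tree_le_root
    chain_down
  by blast

lemma inj_on_level_chain: "is_chain tree_le C \<Longrightarrow> inj_on level C"
  unfolding inj_on_def is_chain_def tree_le_def by (metis node_level_index diff_self_eq_0)

lemma card_chain_le: "C \<subseteq> nodes \<Longrightarrow> is_chain tree_le C \<Longrightarrow> card C \<le> Suc H"
proof -
  assume C: "C \<subseteq> nodes" "is_chain tree_le C"
  have "card C = card (level ` C)" using inj_on_level_chain[OF C(2)] by (simp add: card_image)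
  also have "\<dots> \<le> card {..H}" using C(1) by (intro card_mono) (auto simp: nodes_def)
  finally show ?thesis by simp
qed

definition spine :: "nat set" where
  "spine = (\<lambda>l. node l 0) ` {..H}"

lemma spine_subset: "spine \<subseteq> nodes"
  using B_pos by (auto simp: spine_def node_in_nodes_iff)

lemma chain_spine: "is_chain tree_le spine"
  by (auto simp: spine_def is_chain_def tree_le_node)

lemma card_spine: "card spine = Suc H"
proof -
  have "inj_on (\<lambda>l. node l 0) {..H}" by (auto simp: inj_on_def node_eq_iff)
  then show ?thesis by (simp add: spine_def card_image)
qed

lemma has_height_nodes: "has_height nodes tree_le H"
  unfolding has_height_def
proof (intro conjI allI impI)
  show "\<exists>C \<subseteq> nodes. is_chain tree_le C \<and> finite C \<and> card C = H + 1"
    using spine_subset chain_spine card_spine finite_nodes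
    by (intro exI[of _ spine]) (auto intro: rev_finite_subset)
  fix C assume C: "C \<subseteq> nodes \<and> is_chain tree_le C"
  then show "finite C" using finite_nodes by (auto intro: rev_finite_subset)
  show "card C \<le> H + 1" using C card_chain_le by simp
qed

lemma tops_nodes: "tops nodes tree_le = node H ` {..<B ^ H}"
proof
  show "tops nodes tree_le \<subseteq> node H ` {..<B ^ H}"
  proof
    fix u assume u: "u \<in> tops nodes tree_le"
    then have u_nodes: "u \<in> nodes" by (simp add: tops_def)
    have "level u = H"
    proof (rule ccontr)
      assume "level u \<noteq> H"
      then have lt: "level u < H" using u_nodes by (simp add: nodes_def)
      define v where "v = node (Suc (level u)) (index u * B)"
      have "index u * B < B ^ Suc (level u)"
        using u_nodes B_pos by (simp add: nodes_def mult.commute)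
      then have "v \<in> nodes" using lt by (simp add: v_def node_in_nodes_iff)
      moreover have "tree_le u v" using B_pos by (simp add: v_def tree_le_node)
      moreover have "v \<noteq> u" by (metis v_def level_node n_not_Suc_n)
      ultimately show False using u by (auto simp: tops_def)
    qed
    then have "u = node H (index u)" "index u < B ^ H"
      using u_nodes node_level_index[of u] by (simp_all add: nodes_def)
    then show "u \<in> node H ` {..<B ^ H}" by blast
  qed
  show "node H ` {..<B ^ H} \<subseteq> tops nodes tree_le"
  proof
    fix u assume "u \<in> node H ` {..<B ^ H}"
    then obtain i where u: "u = node H i" "i < B ^ H" by blast
    have "v = u" if v: "v \<in> nodes" "tree_le u v" for v
    proof -
      have "level v = H" using v u by (simp add: nodes_def tree_le_def)
      moreover have "index v = i" using v u \<open>level v = H\<close> by (simp add: tree_le_def)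
      ultimately show ?thesis using u node_level_index[of v] by simp
    qed
    then show "u \<in> tops nodes tree_le" using u by (simp add: tops_def node_in_nodes_iff)
  qed
qed

lemma down_leaf:
  assumes i: "i < B ^ H"
  shows "down nodes tree_le (node H i) = (\<lambda>l. node l (i div B ^ (H - l))) ` {..H}"
proof
  show "down nodes tree_le (node H i) \<subseteq> (\<lambda>l. node l (i div B ^ (H - l))) ` {..H}"
  proof
    fix v assume "v \<in> down nodes tree_le (node H i)"
    then have "level v \<le> H" "index v = i div B ^ (H - level v)"
      by (auto simp: down_def tree_le_node)
    moreover have "v = node (level v) (index v)" by simp
    ultimately show "v \<in> (\<lambda>l. node l (i div B ^ (H - l))) ` {..H}" by auto
  qed
  show "(\<lambda>l. node l (i div B ^ (H - l))) ` {..H} \<subseteq> down nodes tree_le (node H i)"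
  proof
    fix v assume "v \<in> (\<lambda>l. node l (i div B ^ (H - l))) ` {..H}"
    then obtain l where l: "l \<le> H" "v = node l (i div B ^ (H - l))" by auto
    have "B ^ H = B ^ (H - l) * B ^ l" using l by (metis le_add_diff_inverse2 power_add)
    then have "i div B ^ (H - l) < B ^ l" using i B_pos
      by (simp add: div_less_iff_less_mult mult.commute)
    then show "v \<in> down nodes tree_le (node H i)"
      using l by (simp add: down_def node_in_nodes_iff tree_le_node)
  qed
qed

lemma card_down_leaf:
  assumes "i < B ^ H"
  shows "card (down nodes tree_le (node H i)) = Suc H"
proof -
  have "inj_on (\<lambda>l. node l (i div B ^ (H - l))) {..H}" by (simp add: inj_on_def node_eq_iff)
  then show ?thesis using down_leaf[OF assms] by (simp add: card_image)
qed

lemma plane_enum_leaves: "plane_enum nodes tree_le leaves"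
  unfolding plane_enum_def
proof (intro conjI ballI allI impI)
  show "distinct leaves" by (simp add: leaves_def distinct_map inj_on_def node_eq_iff)
  show "set leaves = tops nodes tree_le" by (auto simp: leaves_def tops_nodes)
  fix u i j k
  assume u: "u \<in> nodes" and ijk: "i < j \<and> j < k \<and> k < length leaves \<and>
    tree_le u (leaves ! i) \<and> tree_le u (leaves ! k)"
  then have "i div B ^ (H - level u) = index u" "k div B ^ (H - level u) = index u" "level u \<le> H"
    by (auto simp: nth_leaves tree_le_node)
  moreover have "i div B ^ (H - level u) \<le> j div B ^ (H - level u)"
    "j div B ^ (H - level u) \<le> k div B ^ (H - level u)"
    using ijk by (auto intro: div_le_mono)
  ultimately show "tree_le u (leaves ! j)" using ijk by (simp add: nth_leaves tree_le_node)
qed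

lemma sawed_tree_data_nodes: "sawed_tree_data nodes tree_le leaves"
  unfolding sawed_tree_data_def
  using finite_tree_nodes has_height_nodes H_pos card_down_leaf plane_enum_leaves
  by (auto simp: tops_nodes)

lemma has_height_sawed: "has_height (sawed_carrier nodes leaves) (sawed_le tree_le leaves) (Suc H)"
  unfolding has_height_def
proof (intro conjI allI impI)
  define C :: "(nat + nat) set" where "C = insert (Inr 0) (Inl ` spine)"
  have "leaves ! 0 = node H 0" using B_pos by (intro nth_leaves) simp
  then have "is_chain (sawed_le tree_le leaves) C"
    by (auto simp: C_def is_chain_def spine_def tree_le_node)
  moreover have "C \<subseteq> sawed_carrier nodes leaves"
    using spine_subset two_le_leaf_count by (auto simp: C_def sawed_carrier_def)
  moreover have "finite spine" using spine_subset finite_nodes by (rule finite_subset)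
  then have "finite C" "card C = Suc H + 1"
    using card_spine by (simp_all add: C_def card_image inj_on_def image_iff)
  ultimately show "\<exists>C \<subseteq> sawed_carrier nodes leaves. is_chain (sawed_le tree_le leaves) C \<and>
      finite C \<and> card C = Suc H + 1"
    by blast
next
  fix C assume C: "C \<subseteq> sawed_carrier nodes leaves \<and> is_chain (sawed_le tree_le leaves) C"
  have "finite (sawed_carrier nodes leaves)" using finite_nodes by (rule finite_sawed_carrier)
  then show "finite C" using C by (auto intro: rev_finite_subset)
  show "card C \<le> Suc H + 1"
    using card_sawed_chain_le[where le = tree_le and n = H, OF finite_nodes _ _ card_chain_le] C
    by auto
qed

end

section \<open>Labelling a complete tree by walks\<close>

locale sawing = PL_frame F le + complete_tree B H
  for F :: "'a set" and le :: "'a \<Rightarrow> 'a \<Rightarrow> bool" and B H :: nat +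
  fixes r m :: 'a and children :: "nat \<Rightarrow> 'a label \<Rightarrow> 'a label list"
  assumes root: "is_root F le r" and m_max_above_root: "m \<in> max_above r"
    and depth_root: "depth_le r (Suc H)"
    and walk_children: "\<And>h s. h < H \<Longrightarrow> admissible (Suc h) s \<Longrightarrow>
      walk h s (children h s) \<and> length (children h s) = B"
begin

primrec label :: "nat \<Rightarrow> nat \<Rightarrow> 'a label" where
  "label 0 j = (r, m, m)"
| "label (Suc l) j = children (H - Suc l) (label l (j div B)) ! (j mod B)"

declare label.simps(2) [simp del]

abbreviation point :: "nat \<Rightarrow> nat \<Rightarrow> 'a" where
  "point l j \<equiv> fst (label l j)"

abbreviation left_max :: "nat \<Rightarrow> nat \<Rightarrow> 'a" where
  "left_max l j \<equiv> fst (snd (label l j))"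

abbreviation right_max :: "nat \<Rightarrow> nat \<Rightarrow> 'a" where
  "right_max l j \<equiv> snd (snd (label l j))"

abbreviation child_labels :: "nat \<Rightarrow> nat \<Rightarrow> 'a label list" where
  "child_labels l j \<equiv> children (H - Suc l) (label l j)"

lemma label_Suc: "label (Suc l) j = child_labels l (j div B) ! (j mod B)"
  by (simp add: label.simps(2))

lemma label_child: "p < B \<Longrightarrow> label (Suc l) (j * B + p) = child_labels l j ! p"
  using B_pos by (simp add: label_Suc)

lemma label_admissible: "l \<le> H \<Longrightarrow> j < B ^ l \<Longrightarrow> admissible (H - l) (label l j)"
proof (induction l arbitrary: j)
  case 0
  have "r \<in> F" using root by (simp add: is_root_def)
  then show ?case using m_max_above_root depth_root H_pos by simp
next
  case (Suc l)
  have "H - l = Suc (H - Suc l)" using Suc.prems(1) by simp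
  then have "admissible (Suc (H - Suc l)) (label l (j div B))"
    using Suc.IH[of "j div B"] Suc.prems div_B_less by simp
  then have "walk (H - Suc l) (label l (j div B)) (child_labels l (j div B))"
    and "length (child_labels l (j div B)) = B"
    using walk_children Suc.prems(1) by auto
  moreover have "j mod B < B" using B_pos by simp
  ultimately show ?case
    using walk_labels_above by (simp add: label_Suc labels_above_def)
qed

lemma walk_child_labels:
  assumes "l < H" "j < B ^ l"
  shows "walk (H - Suc l) (label l j) (child_labels l j)" "length (child_labels l j) = B"
proof -
  have "admissible (H - l) (label l j)" using label_admissible assms by simp
  moreover have "H - l = Suc (H - Suc l)" using assms(1) by simp
  ultimately have "admissible (Suc (H - Suc l)) (label l j)" by simp
  then show "walk (H - Suc l) (label l j) (child_labels l j)" "length (child_labels l j) = B"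
    using walk_children assms(1) by auto
qed

lemma point_in_F: "l \<le> H \<Longrightarrow> j < B ^ l \<Longrightarrow> point l j \<in> F"
  using label_admissible[of l j] by (cases "label l j") simp

lemma max_above_point:
  "l \<le> H \<Longrightarrow> j < B ^ l \<Longrightarrow> left_max l j \<in> max_above (point l j) \<and> right_max l j \<in> max_above (point l j)"
  using label_admissible[of l j] by (cases "label l j") simp

lemma point_le_child:
  assumes "l < H" "j < B ^ Suc l"
  shows "le (point l (j div B)) (point (Suc l) j)"
proof -
  have "j div B < B ^ l" using assms(2) by (rule div_B_less)
  then have "walk (H - Suc l) (label l (j div B)) (child_labels l (j div B))"
    "length (child_labels l (j div B)) = B"
    using walk_child_labels assms(1) by auto
  moreover have "j mod B < B" using B_pos by simp
  ultimately show ?thesis using walk_labels_above by (simp add: label_Suc labels_above_def)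
qed

lemma point_mono: "l + d \<le> H \<Longrightarrow> j < B ^ (l + d) \<Longrightarrow> le (point l (j div B ^ d)) (point (l + d) j)"
proof (induction d arbitrary: j)
  case 0
  then show ?case using point_in_F F_refl by simp
next
  case (Suc d)
  have j_div: "j div B < B ^ (l + d)" using Suc.prems(2) div_B_less by simp
  have le1: "le (point l (j div B div B ^ d)) (point (l + d) (j div B))" using Suc j_div by simp
  have le2: "le (point (l + d) (j div B)) (point (Suc (l + d)) j)"
    using point_le_child Suc.prems by simp
  have "j div B div B ^ d < B ^ l"
    using j_div B_pos by (simp add: div_less_iff_less_mult power_add)
  then have "point l (j div B div B ^ d) \<in> F" using point_in_F Suc.prems(1) by simp
  moreover have "point (l + d) (j div B) \<in> F" "point (Suc (l + d)) j \<in> F"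
    using point_in_F Suc.prems j_div by simp_all
  ultimately have "le (point l (j div B div B ^ d)) (point (Suc (l + d)) j)"
    using F_trans le1 le2 by blast
  moreover have "j div B ^ Suc d = j div B div B ^ d" by (simp add: div_mult2_eq power_Suc)
  ultimately show ?case by simp
qed

text \<open>Adjacent nodes on a level share the maximal point between them: within one family by
  the walk condition, across families because walks start and end with \<open>(a, a, a)\<close> and
  \<open>(b, b, b)\<close>.\<close>
lemma right_max_eq_left_max_Suc: "l \<le> H \<Longrightarrow> Suc j < B ^ l \<Longrightarrow> right_max l j = left_max l (Suc j)"
proof (induction l arbitrary: j)
  case 0
  then show ?case by simp
next
  case (Suc l)
  define p q where "p = j div B" and "q = j mod B"
  have j: "j = p * B + q" and q: "q < B" using B_pos by (simp_all add: p_def q_def)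
  have l: "l < H" and p: "p < B ^ l" using Suc.prems div_B_less by (auto simp: p_def)
  have walk_p: "walk (H - Suc l) (label l p) (child_labels l p)" "length (child_labels l p) = B"
    using walk_child_labels[OF l p] by auto
  show ?case
  proof (cases "Suc q < B")
    case True
    have "label (Suc l) j = child_labels l p ! q" "label (Suc l) (Suc j) = child_labels l p ! Suc q"
      using label_child[OF q] label_child[OF True] j by simp_all
    then show ?thesis using label_path_nth[OF walk_label_path[OF walk_p(1)]] walk_p(2) True by simp
  next
    case False
    then have "q = B - 1" using q by simp
    then have Suc_j: "Suc j = Suc p * B + 0" using j B_pos by simp
    then have "Suc p * B < B ^ l * B" using Suc.prems(2) by (simp add: mult.commute)
    then have Suc_p: "Suc p < B ^ l" using mult_less_cancel2 by blast
    have walk_Suc_p: "walk (H - Suc l) (label l (Suc p)) (child_labels l (Suc p))"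
      using walk_child_labels[OF l Suc_p] by auto
    have "right_max (Suc l) j = right_max l p"
      using label_child[OF q, of l p] walk_last[OF walk_p(1)] walk_p(2) j \<open>q = B - 1\<close> by simp
    also have "\<dots> = left_max l (Suc p)" using Suc.IH Suc.prems(1) Suc_p by simp
    also have "\<dots> = left_max (Suc l) (Suc j)"
      using label_child[OF B_pos, of l "Suc p"] walk_first[OF walk_Suc_p] Suc_j by simp
    finally show ?thesis .
  qed
qed

lemma leftmost_label: "0 < l \<Longrightarrow> l \<le> H \<Longrightarrow> label l 0 = (m, m, m)"
proof (induction l)
  case 0
  then show ?case by simp
next
  case (Suc l)
  have "left_max l 0 = m" using Suc by (cases "l = 0") auto
  moreover have "walk (H - Suc l) (label l 0) (child_labels l 0)"
    using walk_child_labels[of l 0] Suc.prems(2) B_pos by simp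
  ultimately show ?case using walk_first label_child[OF B_pos, of l 0] by simp
qed

lemma rightmost_label: "0 < l \<Longrightarrow> l \<le> H \<Longrightarrow> label l (B ^ l - 1) = (m, m, m)"
proof (induction l)
  case 0
  then show ?case by simp
next
  case (Suc l)
  have last: "B ^ Suc l - 1 = (B ^ l - 1) * B + (B - 1)"
    using B_pos by (simp add: algebra_simps power_Suc2 diff_mult_distrib)
  have "B ^ l - 1 < B ^ l" using B_pos by simp
  then have walk: "walk (H - Suc l) (label l (B ^ l - 1)) (child_labels l (B ^ l - 1))"
    and len: "length (child_labels l (B ^ l - 1)) = B"
    using walk_child_labels Suc.prems(2) by auto
  have "label (Suc l) (B ^ Suc l - 1) = child_labels l (B ^ l - 1) ! (B - 1)"
    unfolding last by (rule label_child) (use B_pos in simp)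
  also have "\<dots> = (right_max l (B ^ l - 1), right_max l (B ^ l - 1), right_max l (B ^ l - 1))"
    using walk_last[OF walk] len by simp
  also have "\<dots> = (m, m, m)" using Suc by (cases "l = 0") auto
  finally show ?case .
qed

definition node_point :: "nat \<Rightarrow> 'a" where
  "node_point u = point (level u) (index u)"

definition leaves_below :: "nat \<Rightarrow> nat set" where
  "leaves_below u = {i. i < B ^ H \<and> tree_le u (node H i)}"

definition subtree_image :: "nat \<Rightarrow> 'a set" where
  "subtree_image u = node_point ` {v \<in> nodes. tree_le u v}
     \<union> left_max H ` leaves_below u \<union> right_max H ` leaves_below u"

lemma subtree_image_antimono: "tree_le u v \<Longrightarrow> subtree_image v \<subseteq> subtree_image u"
  unfolding subtree_image_def leaves_below_def using tree_le_trans by blast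

lemma node_point_mono:
  assumes "v \<in> nodes" "tree_le u v"
  shows "le (node_point u) (node_point v)"
proof -
  have "level u + (level v - level u) \<le> H" "index v < B ^ (level u + (level v - level u))"
    using assms by (auto simp: nodes_def tree_le_def)
  then show ?thesis using point_mono assms(2) by (fastforce simp: node_point_def tree_le_def)
qed

lemma node_point_in_F: "u \<in> nodes \<Longrightarrow> node_point u \<in> F"
  using point_in_F by (simp add: nodes_def node_point_def)

lemma up_node_point_subset: "u \<in> nodes \<Longrightarrow> up F le (node_point u) \<subseteq> subtree_image u"
proof (induction "H - level u" arbitrary: u)
  case 0
  then have level: "level u = H" by (simp add: nodes_def)
  then have u: "u = node H (index u)" "index u < B ^ H"
    using node_level_index[of u] "0.prems" by (simp_all add: nodes_def)
  then have "up F le (node_point u) = {node_point u, left_max H (index u), right_max H (index u)}"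
    using label_admissible[of H "index u"] level
    by (cases "label H (index u)") (simp add: node_point_def)
  moreover have "index u \<in> leaves_below u"
    using u tree_le_refl[of u] by (simp add: leaves_below_def)
  ultimately show ?case using "0.prems" tree_le_refl[of u] by (auto simp: subtree_image_def)
next
  case (Suc d)
  define l j where "l = level u" and "j = index u"
  have l: "l < H" and j: "j < B ^ l"
    using Suc.hyps(2) Suc.prems by (auto simp: l_def j_def nodes_def)
  have walk: "walk (H - Suc l) (label l j) (child_labels l j)" "length (child_labels l j) = B"
    using walk_child_labels[OF l j] by auto
  have children: "up F le (fst c) \<subseteq> subtree_image u" if c: "c \<in> set (child_labels l j)" for c
  proof -
    obtain p where p: "p < B" "c = child_labels l j ! p"
      using c walk(2) by (auto simp: in_set_conv_nth)
    define v where "v = node (Suc l) (j * B + p)"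
    have "j * B + p < (j + 1) * B" using p by simp
    also have "\<dots> \<le> B ^ l * B" using j by (intro mult_right_mono) auto
    finally have "v \<in> nodes" using l by (simp add: v_def node_in_nodes_iff mult.commute)
    moreover have "d = H - level v" using Suc.hyps(2) by (simp add: v_def l_def)
    ultimately have "up F le (node_point v) \<subseteq> subtree_image v" using Suc.hyps(1) by blast
    moreover have "tree_le u v" using p B_pos by (simp add: v_def tree_le_node l_def j_def)
    moreover have "fst c = node_point v"
      using label_child[OF p(1)] p by (simp add: v_def node_point_def)
    ultimately show ?thesis using subtree_image_antimono[of u v] by auto
  qed
  have point: "node_point u = point l j" by (simp add: node_point_def l_def j_def)
  moreover have "node_point u \<in> subtree_image u"
    using Suc.prems tree_le_refl by (auto simp: subtree_image_def)
  ultimately have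
    "insert (point l j) (\<Union>c \<in> set (child_labels l j). up F le (fst c)) \<subseteq> subtree_image u"
    using children by (simp add: UN_subset_iff)
  then show ?case using walk_covers[OF walk(1)] point by (metis order_trans)
qed

abbreviation saw :: "(nat + nat) set" where
  "saw \<equiv> sawed_carrier nodes leaves"

abbreviation saw_le :: "nat + nat \<Rightarrow> nat + nat \<Rightarrow> bool" where
  "saw_le \<equiv> sawed_le tree_le leaves"

text \<open>The tooth \<open>Inr i\<close> between the leaves \<open>i\<close> and \<open>i + 1\<close> goes to the maximal point they share.\<close>
definition proj :: "nat + nat \<Rightarrow> 'a" where
  "proj z = (case z of Inl u \<Rightarrow> node_point u | Inr i \<Rightarrow> right_max H i)"

lemma proj_simps [simp]: "proj (Inl u) = node_point u" "proj (Inr i) = right_max H i"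
  by (simp_all add: proj_def)

lemma up_sawed_leaf:
  assumes "u \<in> nodes"
  shows "up saw saw_le (Inl u) = Inl ` {v \<in> nodes. tree_le u v} \<union>
     Inr ` {i. Suc i < B ^ H \<and> (i \<in> leaves_below u \<or> Suc i \<in> leaves_below u)}"
proof -
  have "{i. Suc i < length leaves \<and> (tree_le u (leaves ! i) \<or> tree_le u (leaves ! Suc i))} =
      {i. Suc i < B ^ H \<and> (i \<in> leaves_below u \<or> Suc i \<in> leaves_below u)}"
    by (auto simp: leaves_below_def nth_leaves)
  then show ?thesis using up_sawed_Inl[OF assms, of leaves tree_le] by (simp add: up_def)
qed

lemma maxima_of_leaf_in_up:
  assumes u: "u \<in> nodes" and i: "i \<in> leaves_below u"
  shows "left_max H i \<in> up F le (node_point u)" "right_max H i \<in> up F le (node_point u)"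
proof -
  have i_lt: "i < B ^ H" and "tree_le u (node H i)" using i by (auto simp: leaves_below_def)
  then have "le (node_point u) (point H i)"
    using node_point_mono[of "node H i" u] by (simp add: node_in_nodes_iff node_point_def)
  moreover have "left_max H i \<in> max_above (point H i)" "right_max H i \<in> max_above (point H i)"
    using max_above_point i_lt by simp_all
  moreover have "node_point u \<in> F" "point H i \<in> F"
    using node_point_in_F[OF u] point_in_F i_lt by simp_all
  ultimately show "left_max H i \<in> up F le (node_point u)" "right_max H i \<in> up F le (node_point u)"
    using F_trans max_above_subset unfolding max_above_def up_def by blast+
qed

lemma image_up_subset: "u \<in> nodes \<Longrightarrow> proj ` up saw saw_le (Inl u) \<subseteq> up F le (node_point u)"
proof -
  assume u: "u \<in> nodes"
  have "node_point v \<in> up F le (node_point u)" if "v \<in> nodes" "tree_le u v" for v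
    using that node_point_mono node_point_in_F by (simp add: up_def)
  moreover have "right_max H i \<in> up F le (node_point u)"
    if "Suc i < B ^ H" "i \<in> leaves_below u \<or> Suc i \<in> leaves_below u" for i
  proof (cases "i \<in> leaves_below u")
    case True
    then show ?thesis by (rule maxima_of_leaf_in_up(2)[OF u])
  next
    case False
    then have "right_max H i = left_max H (Suc i)" "Suc i \<in> leaves_below u"
      using that right_max_eq_left_max_Suc[of H i] by simp_all
    then show ?thesis using maxima_of_leaf_in_up(1)[OF u] by simp
  qed
  ultimately show ?thesis by (auto simp: up_sawed_leaf[OF u])
qed

lemma leaf_point_in_image_up:
  assumes "u \<in> nodes" "i \<in> leaves_below u"
  shows "point H i \<in> proj ` up saw saw_le (Inl u)"
proof -
  have "node H i \<in> {v \<in> nodes. tree_le u v}"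
    using assms(2) by (simp add: leaves_below_def node_in_nodes_iff)
  then show ?thesis by (force simp: up_sawed_leaf[OF assms(1)] node_point_def)
qed

text \<open>The outermost leaves carry \<open>(m, m, m)\<close>, so their outer maximal points, which have no tooth
  beyond them, are still reached.\<close>
lemma subtree_image_subset: "u \<in> nodes \<Longrightarrow> subtree_image u \<subseteq> proj ` up saw saw_le (Inl u)"
proof -
  assume u: "u \<in> nodes"
  have "left_max H i \<in> proj ` up saw saw_le (Inl u)" if i: "i \<in> leaves_below u" for i
  proof (cases i)
    case 0
    then show ?thesis using leaf_point_in_image_up[OF u i] leftmost_label[of H] H_pos by simp
  next
    case (Suc k)
    then have "Inr k \<in> up saw saw_le (Inl u)" "left_max H i = right_max H k"
      using i right_max_eq_left_max_Suc[of H k] by (auto simp: up_sawed_leaf[OF u] leaves_below_def)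
    then show ?thesis by (metis image_eqI proj_simps(2))
  qed
  moreover have "right_max H i \<in> proj ` up saw saw_le (Inl u)" if i: "i \<in> leaves_below u" for i
  proof (cases "Suc i < B ^ H")
    case True
    then have "Inr i \<in> up saw saw_le (Inl u)" using i by (simp add: up_sawed_leaf[OF u])
    then show ?thesis by (metis image_eqI proj_simps(2))
  next
    case False
    moreover have "i < B ^ H" using i by (simp add: leaves_below_def)
    ultimately have "i = B ^ H - 1" by linarith
    then show ?thesis using leaf_point_in_image_up[OF u i] rightmost_label[of H] H_pos by simp
  qed
  moreover have "node_point ` {v \<in> nodes. tree_le u v} \<subseteq> proj ` up saw saw_le (Inl u)"
    by (force simp: up_sawed_leaf[OF u])
  ultimately show ?thesis unfolding subtree_image_def by blast
qed

lemma image_up_Inl: "u \<in> nodes \<Longrightarrow> proj ` up saw saw_le (Inl u) = up F le (node_point u)"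
  using image_up_subset up_node_point_subset subtree_image_subset by blast

lemma proj_p_morphism_at:
  assumes "z \<in> saw"
  shows "proj z \<in> F \<and> proj ` up saw saw_le z = up F le (proj z)"
proof -
  consider (node) u where "u \<in> nodes" "z = Inl u" | (tooth) i where "Suc i < B ^ H" "z = Inr i"
    using assms by (auto simp: sawed_carrier_def)
  then show ?thesis
  proof cases
    case node
    then show ?thesis using node_point_in_F image_up_Inl by simp
  next
    case tooth
    then have "right_max H i \<in> tops F le" using max_above_point[of H i] by (simp add: max_above_def)
    then show ?thesis using tooth up_sawed_Inr[of i leaves] tops_subset up_top by auto
  qed
qed

lemma surj_p_morphism_proj: "surj_p_morphism saw saw_le F le proj"
  unfolding surj_p_morphism_def p_morphism_def
proof (intro conjI)
  show "\<forall>z \<in> saw. proj z \<in> F" "\<forall>z \<in> saw. proj ` up saw saw_le z = up F le (proj z)"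
    using proj_p_morphism_at by blast+
  have "node_point (node 0 0) = r" by (simp add: node_point_def)
  moreover have "up F le r = F" using root by (auto simp: is_root_def up_def)
  ultimately have "F = proj ` up saw saw_le (Inl (node 0 0))"
    using image_up_Inl root_in_nodes by simp
  also have "\<dots> \<subseteq> proj ` saw" by (auto simp: up_def)
  finally show "proj ` saw = F" using proj_p_morphism_at by blast
qed

end

theorem lemma7p8:
  fixes F :: "'a set" and le :: "'a \<Rightarrow> 'a \<Rightarrow> bool" and n :: nat
  assumes "n \<ge> 2"
    and "finite_rooted_poset F le"
    and "has_height F le n"
    and "validates_PL F le"
  shows "\<exists>(T :: nat set) leT ts f.
           sawed_tree_data T leT ts \<and>
           has_height (sawed_carrier T ts) (sawed_le leT ts) n \<and>
           surj_p_morphism (sawed_carrier T ts) (sawed_le leT ts) F le f"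
proof -
  interpret PL_frame F le
    using assms(2,4) by unfold_locales (auto simp: finite_rooted_poset_def)
  obtain r where root: "is_root F le r" using assms(2) by (auto simp: finite_rooted_poset_def)
  then obtain m where m: "m \<in> max_above r" using max_above_nonempty by (auto simp: is_root_def)
  define H where "H = n - 1"
  have n: "n = Suc H" using assms(1) by (simp add: H_def)
  have depth: "depth_le r (Suc H)" using depth_le_if_has_height[OF assms(3)] n by simp
  obtain B children where "B \<ge> 2" and "\<forall>h < H. \<forall>s. admissible (Suc h) s \<longrightarrow>
      walk h s (children h s) \<and> length (children h s) = B"
    using ex_uniform_walks[of H] by blast
  then interpret sawing F le B H r m children
    using assms(1) root m depth by unfold_locales (auto simp: H_def)
  show ?thesis using sawed_tree_data_nodes has_height_sawed surj_p_morphism_proj n by blast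
qed

end
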